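(* If $\psi,\phi\in\mathcal{S}(\mathbb{R}_+)$, then $W_{\mathrm{Aff}}^{\psi,\phi}\in\mathcal{S}(\mathrm{Aff})$.
   Context: $\mathcal{S}(\mathbb{R}_+)$ is the space of smooth $\psi:\mathbb{R}_+\to\mathbb{C}$ such that $x\mapsto\psi(e^x)$ lies in the Schwartz space $\mathcal{S}(\mathbb{R})$. $\mathcal{S}(\mathrm{Aff})$ is the space of smooth functions $f$ on $\mathbb{R}\times\mathbb{R}_+$ such that $(x,\omega)\mapsto f(x,e^\omega)$ lies in $\mathcal{S}(\mathbb{R}^2)$. Let $\lambda(u) := \frac{ue^u}{e^u-1}$ for $u\neq 0$, $\lambda(0):=1$. Affine cross-Wigner transform: $W_{\mathrm{Aff}}^{\psi,\phi}(x,a) := \int_{-\infty}^{\infty}\psi(a\lambda(u))\overline{\phi(a\lambda(-u))}e^{-2\pi i x u}\,du$ for $x\in\mathbb{R}$, $a>0$. *)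

theory Defs
  imports "HOL-Analysis.Analysis"
begin

definition vd1 :: "(real \<Rightarrow> complex) \<Rightarrow> real \<Rightarrow> complex" where
  "vd1 f x = vector_derivative f (at x)"

definition schwartz1 :: "(real \<Rightarrow> complex) \<Rightarrow> bool" where
  "schwartz1 f \<longleftrightarrow>
     (\<forall>n x. ((vd1 ^^ n) f) differentiable (at x)) \<and>
     (\<forall>m n. bounded (range (\<lambda>x. complex_of_real (x ^ m) * (vd1 ^^ n) f x)))"

definition pdir :: "bool \<Rightarrow> (real \<Rightarrow> real \<Rightarrow> complex) \<Rightarrow> real \<Rightarrow> real \<Rightarrow> complex" where
  "pdir d g = (if d then (\<lambda>x y. vector_derivative (\<lambda>t. g t y) (at x))
                    else (\<lambda>x y. vector_derivative (\<lambda>t. g x t) (at y)))"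

definition pderivs :: "bool list \<Rightarrow> (real \<Rightarrow> real \<Rightarrow> complex) \<Rightarrow> real \<Rightarrow> real \<Rightarrow> complex" where
  "pderivs ws g = foldr pdir ws g"

definition schwartz2 :: "(real \<Rightarrow> real \<Rightarrow> complex) \<Rightarrow> bool" where
  "schwartz2 f \<longleftrightarrow>
     (\<forall>ws. continuous_on UNIV (\<lambda>p. pderivs ws f (fst p) (snd p)) \<and>
           (\<forall>x y. (\<lambda>t. pderivs ws f t y) differentiable (at x) \<and>
                  (\<lambda>t. pderivs ws f x t) differentiable (at y))) \<and>
     (\<forall>ws a b. bounded (range (\<lambda>p::real\<times>real.
        complex_of_real (fst p ^ a * snd p ^ b) * pderivs ws f (fst p) (snd p))))"

definition schwartz_Rplus :: "(real \<Rightarrow> complex) \<Rightarrow> bool" where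
  "schwartz_Rplus \<psi> \<longleftrightarrow> schwartz1 (\<lambda>x. \<psi> (exp x))"

definition schwartz_Aff :: "(real \<Rightarrow> real \<Rightarrow> complex) \<Rightarrow> bool" where
  "schwartz_Aff f \<longleftrightarrow> schwartz2 (\<lambda>x \<omega>. f x (exp \<omega>))"

definition lam :: "real \<Rightarrow> real" where
  "lam u = (if u = 0 then 1 else u * exp u / (exp u - 1))"

definition W_Aff :: "(real \<Rightarrow> complex) \<Rightarrow> (real \<Rightarrow> complex) \<Rightarrow> real \<Rightarrow> real \<Rightarrow> complex" where
  "W_Aff \<psi> \<phi> x a = (LINT u|lborel. \<psi> (a * lam u) * cnj (\<phi> (a * lam (- u)))
                        * cis (- 2 * pi * x * u))"

end

theory Submission
  imports Defs "HOL-Probability.Sinc_Integral" "HOL-Real_Asymp.Real_Asymp"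
begin

text \<open>Put \<open>F = \<psi> \<circ> exp\<close>, \<open>G = \<phi> \<circ> exp\<close> and \<open>a = exp \<omega>\<close>. With \<open>I(u) = \<integral>\<^sub>0\<^sup>1 e\<^sup>t\<^sup>u dt\<close> one has
  \<open>lam u = e\<^sup>u / I(u)\<close> and \<open>lam (-u) = 1 / I(u)\<close>, so \<open>W(x, e\<^sup>\<omega>)\<close> is the Fourier transform in \<open>u\<close>
  of the kernel \<open>F(\<omega> + ln lam u) \<cdot> conj G(\<omega> + ln lam (-u))\<close>. The two shifts differ by \<open>u\<close> and
  their sum is at most \<open>|u|\<close>, since \<open>I(u)\<close> lies between \<open>1\<close> and \<open>e\<^sup>u\<close>; hence \<open>|u|\<close> and \<open>|\<omega>|\<close>
  are both bounded by \<open>|\<omega> + ln lam u| + |\<omega> + ln lam (-u)|\<close>, and the rapid decay of \<open>F\<close>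
  and \<open>G\<close> makes every \<open>\<omega>\<^sup>b\<close> times the kernel bounded by a multiple of \<open>1/(1 + u\<^sup>2)\<close>.
  The derivatives of \<open>ln lam\<close> are polynomials in \<open>u\<close> and the moment ratios
  \<open>\<integral>\<^sub>0\<^sup>1 t\<^sup>k e\<^sup>t\<^sup>u dt / I(u) \<in> [0, 1]\<close>, so such kernels form a class closed under \<open>\<partial>\<^sub>\<omega>\<close>,
  \<open>\<partial>\<^sub>u\<close> and multiplication by \<open>u\<close>. Differentiation in \<open>x\<close> multiplies the kernel by
  \<open>-2\<pi>iu\<close>, and multiplication by \<open>x\<close> becomes \<open>\<partial>\<^sub>u\<close> after an integration by parts; so every
  Schwartz seminorm of \<open>W\<close> is finite.\<close>

section \<open>Integrals depending on a parameter\<close>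

lemma has_vector_derivative_iff_tendsto_quotient:
  fixes f :: "real \<Rightarrow> 'a::real_normed_vector"
  shows "(f has_vector_derivative D) (at x) \<longleftrightarrow>
    ((\<lambda>y. inverse (y - x) *\<^sub>R (f y - f x)) \<longlongrightarrow> D) (at x)"
proof -
  have "(f has_vector_derivative D) (at x) \<longleftrightarrow>
     ((\<lambda>y. norm (f y - f x - (y - x) *\<^sub>R D) / norm (y - x)) \<longlongrightarrow> 0) (at x)"
    by (simp add: has_vector_derivative_def has_derivative_iff_norm bounded_linear_scaleR_left)
  also have "\<dots> \<longleftrightarrow> ((\<lambda>y. norm (inverse (y - x) *\<^sub>R (f y - f x) - D)) \<longlongrightarrow> 0) (at x)"
  proof (rule tendsto_cong, unfold eventually_at_filter, intro always_eventually allI impI)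
    fix y assume "y \<noteq> x"
    then have "inverse (y - x) *\<^sub>R (f y - f x) - D = inverse (y - x) *\<^sub>R (f y - f x - (y - x) *\<^sub>R D)"
      by (simp add: scaleR_diff_right)
    then show "norm (f y - f x - (y - x) *\<^sub>R D) / norm (y - x) =
        norm (inverse (y - x) *\<^sub>R (f y - f x) - D)"
      by (simp add: divide_inverse_commute abs_inverse)
  qed
  also have "\<dots> \<longleftrightarrow> ((\<lambda>y. inverse (y - x) *\<^sub>R (f y - f x)) \<longlongrightarrow> D) (at x)"
    by (simp only: tendsto_norm_zero_iff LIM_zero_iff)
  finally show ?thesis .
qed

lemma norm_diff_le_of_vector_derivative_bound:
  fixes g :: "real \<Rightarrow> 'a::real_normed_vector"
  assumes "\<And>p. (g has_vector_derivative g' p) (at p)" and "\<And>p. norm (g' p) \<le> C"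
  shows "norm (g a - g b) \<le> C * \<bar>a - b\<bar>"
  using differentiable_bound[where S=UNIV and f'="\<lambda>p h. h *\<^sub>R g' p" and f=g and B=C, of a b] assms
  by (simp add: has_vector_derivative_def onorm_scaleR_left[OF bounded_linear_ident] onorm_id)

lemma has_vector_derivative_compose_real:
  fixes g :: "real \<Rightarrow> 'a::real_normed_vector"
  assumes "(f has_real_derivative f') (at x)" "(g has_vector_derivative g') (at (f x))"
  shows "((\<lambda>x. g (f x)) has_vector_derivative f' *\<^sub>R g') (at x)"
  using vector_diff_chain_at[of f f' x g g'] assms
  by (simp add: has_real_derivative_iff_has_vector_derivative o_def)

lemma has_vector_derivative_integral_param:
  fixes k k' :: "real \<Rightarrow> real \<Rightarrow> 'a::{banach, second_countable_topology}"
  assumes deriv: "\<And>p u. ((\<lambda>p. k p u) has_vector_derivative k' p u) (at p)"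
    and meas: "\<And>p. k' p \<in> borel_measurable lborel"
    and int: "\<And>p. integrable lborel (k p)"
    and dom: "integrable lborel w" "\<And>p u. norm (k' p u) \<le> w u"
  shows "((\<lambda>p. LINT u|lborel. k p u) has_vector_derivative (LINT u|lborel. k' p u)) (at p)"
  unfolding has_vector_derivative_iff_tendsto_quotient tendsto_at_iff_sequentially comp_def
proof (intro allI impI)
  fix X assume X: "\<forall>i. X i \<in> UNIV - {p}" "X \<longlonglongrightarrow> p"
  define q where "q i u = inverse (X i - p) *\<^sub>R (k (X i) u - k p u)" for i u
  have "(\<lambda>i. LINT u|lborel. q i u) \<longlonglongrightarrow> (LINT u|lborel. k' p u)"
  proof (rule integral_dominated_convergence[where w = w])
    show "(\<lambda>u. q i u) \<in> borel_measurable lborel" for i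
      unfolding q_def using int by (intro borel_measurable_scaleR borel_measurable_diff) auto
    show "AE u in lborel. (\<lambda>i. q i u) \<longlonglongrightarrow> k' p u"
    proof (intro AE_I2)
      fix u
      have "((\<lambda>y. inverse (y - p) *\<^sub>R (k y u - k p u)) \<longlongrightarrow> k' p u) (at p)"
        by (rule has_vector_derivative_iff_tendsto_quotient[THEN iffD1, OF deriv])
      then show "(\<lambda>i. q i u) \<longlonglongrightarrow> k' p u"
        unfolding q_def tendsto_at_iff_sequentially comp_def using X by blast
    qed
    show "AE u in lborel. norm (q i u) \<le> w u" for i
    proof (intro AE_I2)
      fix u
      have "norm (q i u) = norm (k (X i) u - k p u) / \<bar>X i - p\<bar>"
        by (simp only: q_def norm_scaleR abs_inverse divide_inverse_commute)
      also have "\<dots> \<le> w u"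
        using norm_diff_le_of_vector_derivative_bound[OF deriv dom(2), of "X i" u p] X
        by (simp add: divide_le_eq)
      finally show "norm (q i u) \<le> w u" .
    qed
  qed (use meas dom in auto)
  then show "(\<lambda>i. inverse (X i - p) *\<^sub>R ((LINT u|lborel. k (X i) u) - (LINT u|lborel. k p u)))
     \<longlonglongrightarrow> (LINT u|lborel. k' p u)"
    by (simp add: q_def int)
qed

lemma continuous_on_integral_param:
  fixes k :: "'b::{first_countable_topology, t2_space} \<Rightarrow> real \<Rightarrow> 'a::{banach, second_countable_topology}"
  assumes cont: "\<And>u. continuous_on UNIV (\<lambda>q. k q u)"
    and meas: "\<And>q. k q \<in> borel_measurable lborel"
    and dom: "integrable lborel w" "\<And>q u. norm (k q u) \<le> w u"
  shows "continuous_on UNIV (\<lambda>q. LINT u|lborel. k q u)"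
proof (rule continuous_on_sequentiallyI)
  fix X :: "nat \<Rightarrow> 'b" and a assume X: "X \<longlonglongrightarrow> a"
  show "(\<lambda>n. LINT u|lborel. k (X n) u) \<longlonglongrightarrow> (LINT u|lborel. k a u)"
  proof (rule integral_dominated_convergence[where w = w])
    show "AE u in lborel. (\<lambda>n. k (X n) u) \<longlonglongrightarrow> k a u"
      using cont X by (intro AE_I2) (auto simp: continuous_on_eq_continuous_at intro: isCont_tendsto_compose)
  qed (use meas dom in auto)
qed

lemma integrable_inverse_square: "integrable lborel (\<lambda>u::real. inverse (1 + u^2))"
  using integrable_inverse_1_plus_square by (simp add: set_integrable_def)

lemma
  fixes k :: "real \<Rightarrow> 'a::{banach, second_countable_topology}"
  assumes "k \<in> borel_measurable lborel" "\<And>u. norm (k u) \<le> K * inverse (1 + u^2)"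
  shows integrable_of_inverse_square_bound: "integrable lborel k"
    and norm_integral_le_of_inverse_square_bound: "norm (LINT u|lborel. k u) \<le> K * pi"
proof -
  have w: "integrable lborel (\<lambda>u::real. K * inverse (1 + u^2))"
    using integrable_inverse_square by simp
  show k: "integrable lborel k"
    by (rule Bochner_Integration.integrable_bound[OF w assms(1)])
       (use assms(2) in \<open>auto intro: order_trans[OF _ abs_ge_self]\<close>)
  have "norm (LINT u|lborel. k u) \<le> (LINT u|lborel. norm (k u))"
    by (rule integral_norm_bound)
  also have "\<dots> \<le> (LINT u|lborel. K * inverse (1 + u^2))"
    using k w assms(2) by (intro integral_mono) auto
  also have "\<dots> = K * pi"
    using LBINT_inverse_1_plus_square
    by (simp add: interval_lebesgue_integral_def set_lebesgue_integral_def)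
  finally show "norm (LINT u|lborel. k u) \<le> K * pi" .
qed

lemma integral_vector_derivative_eq_0:
  fixes g :: "real \<Rightarrow> 'a::euclidean_space"
  assumes "\<And>u. (g has_vector_derivative g' u) (at u)" "continuous_on UNIV g'" "integrable lborel g'"
    and "(g \<longlongrightarrow> 0) at_bot" "(g \<longlongrightarrow> 0) at_top"
  shows "(LINT u|lborel. g' u) = 0"
proof -
  have "(LBINT u=-\<infinity>..\<infinity>. g' u) = 0 - 0"
    by (rule interval_integral_FTC_integrable[where F=g])
       (use assms in \<open>auto simp: set_integrable_def ereal_tendsto_simps continuous_on_eq_continuous_at\<close>)
  then show ?thesis
    by (simp add: interval_lebesgue_integral_def set_lebesgue_integral_def)
qed

lemma has_vector_derivative_cis_mult:
  "((\<lambda>u. cis (c * u)) has_vector_derivative (\<i> * of_real c * cis (c * u))) (at u within A)"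
proof -
  have "((\<lambda>u. cis (c * u)) has_derivative (\<lambda>t. (c * t) *\<^sub>R (\<i> * cis (c * u)))) (at u within A)"
    by (intro has_derivative_cis has_derivative_mult_right has_derivative_ident)
  then show ?thesis
    by (simp add: has_vector_derivative_def scaleR_conv_of_real mult_ac)
qed

lemma integral_deriv_mult_cis:
  fixes h h' :: "real \<Rightarrow> complex"
  assumes deriv: "\<And>u. (h has_vector_derivative h' u) (at u)" and cont: "continuous_on UNIV h'"
    and bound: "\<And>u. norm (h u) \<le> K * inverse (1 + u^2)" "\<And>u. norm (h' u) \<le> K' * inverse (1 + u^2)"
  shows "(LINT u|lborel. h' u * cis (c * u)) = - (\<i> * of_real c) * (LINT u|lborel. h u * cis (c * u))"
proof -
  define g where "g u = h u * cis (c * u)" for u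
  define g' where "g' u = h' u * cis (c * u) + (\<i> * of_real c) * g u" for u
  have "continuous_on UNIV h"
    using deriv by (intro continuous_at_imp_continuous_on ballI) (auto intro: has_vector_derivative_continuous)
  then have int: "integrable lborel (\<lambda>u. h u * cis (c * u))" "integrable lborel (\<lambda>u. h' u * cis (c * u))"
    using cont bound
    by (auto intro!: integrable_of_inverse_square_bound borel_measurable_continuous_onI
        continuous_intros simp: norm_mult)
  have "(g \<longlongrightarrow> 0) F" if "((\<lambda>u::real. inverse (1 + u^2)) \<longlongrightarrow> 0) F" for F
  proof (rule Lim_null_comparison)
    show "\<forall>\<^sub>F u in F. norm (g u) \<le> K * inverse (1 + u^2)"
      by (simp add: g_def norm_mult bound)
    show "((\<lambda>u. K * inverse (1 + u^2)) \<longlongrightarrow> 0) F"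
      using tendsto_mult_right_zero[OF that] by simp
  qed
  moreover have "((\<lambda>u::real. inverse (1 + u^2)) \<longlongrightarrow> 0) at_bot" "((\<lambda>u::real. inverse (1 + u^2)) \<longlongrightarrow> 0) at_top"
    by real_asymp+
  moreover have "(g has_vector_derivative g' u) (at u)" for u
    unfolding g_def[abs_def] g'_def g_def
    using has_vector_derivative_mult[OF deriv has_vector_derivative_cis_mult[of c u UNIV]]
    by (simp add: algebra_simps)
  ultimately have "(LINT u|lborel. g' u) = 0"
    using int \<open>continuous_on UNIV h\<close> cont
    by (intro integral_vector_derivative_eq_0[where g=g]) (auto simp: g'_def g_def intro!: continuous_intros)
  then show ?thesis
    using int by (simp add: g'_def g_def eq_neg_iff_add_eq_0)
qed

section \<open>The function \<open>lam\<close>\<close>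

definition exp_moment :: "nat \<Rightarrow> real \<Rightarrow> real" where
  "exp_moment k u = integral {0..1} (\<lambda>t. t ^ k * exp (t * u))"

lemma exp_moment_integrable: "(\<lambda>t::real. t ^ k * exp (t * u)) integrable_on {0..1}"
  by (rule integrable_continuous_interval) (auto intro!: continuous_intros)

lemma has_real_derivative_exp_moment: "(exp_moment k has_real_derivative exp_moment (Suc k) u) (at u)"
proof -
  have "((\<lambda>x. integral (cbox 0 1) (\<lambda>t. t ^ k * exp (t * x))) has_field_derivative
      integral (cbox 0 1) (\<lambda>t. t ^ Suc k * exp (t * u))) (at u within UNIV)"
  proof (rule leibniz_rule_field_derivative)
    show "((\<lambda>x. t ^ k * exp (t * x)) has_field_derivative t ^ Suc k * exp (t * x)) (at x within UNIV)"
      for x t :: real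
      by (auto intro!: derivative_eq_intros simp: algebra_simps)
    show "continuous_on (UNIV \<times> cbox 0 1) (\<lambda>(x, t). t ^ Suc k * exp (t * x :: real))"
      by (auto intro!: continuous_intros simp: case_prod_beta)
  qed (use exp_moment_integrable in auto)
  then show ?thesis by (simp add: exp_moment_def[abs_def])
qed

lemma exp_moment_nonneg: "0 \<le> exp_moment k u"
  unfolding exp_moment_def by (rule integral_nonneg[OF exp_moment_integrable]) auto

lemma exp_moment_le_exp_moment_0: "exp_moment k u \<le> exp_moment 0 u"
  unfolding exp_moment_def
  by (rule integral_le[OF exp_moment_integrable exp_moment_integrable])
     (auto intro!: mult_right_le_one_le power_le_one)

lemma exp_moment_0_between: "min 1 (exp u) \<le> exp_moment 0 u \<and> exp_moment 0 u \<le> max 1 (exp u)"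
proof -
  have int_const: "(\<lambda>t::real. c) integrable_on {0..1}" for c :: real
    by (intro integrable_continuous_interval continuous_intros)
  have bounds: "min 1 (exp u) \<le> exp (t * u) \<and> exp (t * u) \<le> max 1 (exp u)" if "t \<in> {0..1}" for t
    using that by (cases "0 \<le> u") (auto simp: mult_left_le_one_le mult_le_cancel_right1 mult_nonneg_nonpos min_def max_def)
  show ?thesis
    using integral_le[OF int_const exp_moment_integrable[of 0 u], of "min 1 (exp u)"]
      integral_le[OF exp_moment_integrable[of 0 u] int_const, of "max 1 (exp u)"] bounds
    by (simp add: exp_moment_def)
qed

lemma exp_moment_0_pos: "0 < exp_moment 0 u"
  using exp_moment_0_between[of u] by (smt (verit) exp_gt_zero)

lemma exp_moment_0_eq: "u \<noteq> 0 \<Longrightarrow> exp_moment 0 u = (exp u - 1) / u"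
proof -
  assume u: "u \<noteq> 0"
  have "((\<lambda>t. exp (t * u)) has_integral (exp (1 * u) / u - exp (0 * u) / u)) {0..1}"
    using u by (intro fundamental_theorem_of_calculus)
       (auto intro!: derivative_eq_intros simp: has_real_derivative_iff_has_vector_derivative[symmetric])
  then show ?thesis
    unfolding exp_moment_def using u by (simp add: integral_unique diff_divide_distrib)
qed

lemma exp_moment_0_at_0: "exp_moment 0 0 = 1"
  by (simp add: exp_moment_def)

lemma lam_eq: "lam u = exp u / exp_moment 0 u"
  using exp_moment_0_pos[of u]
  by (cases "u = 0") (auto simp: lam_def exp_moment_0_eq exp_moment_0_at_0 field_simps)

lemma lam_uminus_eq: "lam (- u) = 1 / exp_moment 0 u"
proof (cases "u = 0")
  case False
  have "exp (- u) - 1 = (1 - exp u) * exp (- u)"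
    by (simp add: algebra_simps exp_minus_inverse)
  with False show ?thesis
    by (simp add: lam_def exp_moment_0_eq field_simps)
qed (simp add: lam_def exp_moment_0_at_0)

lemma lam_pos: "0 < lam u"
  using exp_moment_0_pos[of u] by (simp add: lam_eq)

lemma ln_lam_eq: "ln (lam u) = u - ln (exp_moment 0 u)"
  using exp_moment_0_pos[of u] by (simp add: lam_eq ln_div)

lemma ln_lam_uminus_eq: "ln (lam (- u)) = - ln (exp_moment 0 u)"
  using exp_moment_0_pos[of u] by (simp add: lam_uminus_eq ln_div)

lemma ln_lam_diff: "ln (lam u) - ln (lam (- u)) = u"
  by (simp add: ln_lam_eq[of u] ln_lam_uminus_eq[of u])

lemma abs_ln_lam_add_le: "\<bar>ln (lam u) + ln (lam (- u))\<bar> \<le> \<bar>u\<bar>"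
proof -
  have "ln (min 1 (exp u)) \<le> ln (exp_moment 0 u)" "ln (exp_moment 0 u) \<le> ln (max 1 (exp u))"
    using exp_moment_0_between[of u] exp_moment_0_pos[of u] by (subst ln_le_cancel_iff; simp)+
  then show ?thesis
    by (cases "0 \<le> u") (auto simp: ln_lam_eq[of u] ln_lam_uminus_eq[of u] min_def max_def)
qed

definition moment_ratio :: "nat \<Rightarrow> real \<Rightarrow> real" where
  "moment_ratio k u = exp_moment k u / exp_moment 0 u"

lemma has_real_derivative_ln_lam:
  "((\<lambda>u. ln (lam u)) has_real_derivative 1 - moment_ratio 1 u) (at u)"
  unfolding ln_lam_eq moment_ratio_def
  using exp_moment_0_pos[of u] has_real_derivative_exp_moment[of 0 u]
  by (auto intro!: derivative_eq_intros simp: field_simps)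

lemma has_real_derivative_ln_lam_uminus:
  "((\<lambda>u. ln (lam (- u))) has_real_derivative - moment_ratio 1 u) (at u)"
  unfolding ln_lam_uminus_eq moment_ratio_def
  using exp_moment_0_pos[of u] has_real_derivative_exp_moment[of 0 u]
  by (auto intro!: derivative_eq_intros simp: field_simps)

lemma has_real_derivative_moment_ratio:
  "(moment_ratio k has_real_derivative moment_ratio (Suc k) u - moment_ratio k u * moment_ratio 1 u) (at u)"
  unfolding moment_ratio_def[abs_def]
  using exp_moment_0_pos[of u] has_real_derivative_exp_moment[of 0 u] has_real_derivative_exp_moment[of k u]
  by (auto intro!: derivative_eq_intros simp: field_simps power2_eq_square)

lemma abs_moment_ratio_le_1: "\<bar>moment_ratio k u\<bar> \<le> 1"
  using exp_moment_0_pos[of u] exp_moment_le_exp_moment_0[of k u] exp_moment_nonneg[of k u]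
  by (simp add: moment_ratio_def)

lemma continuous_on_ln_lam [continuous_intros]:
  "continuous_on S g \<Longrightarrow> continuous_on S (\<lambda>x. ln (lam (g x)))"
  by (rule continuous_on_compose2[of UNIV "\<lambda>u. ln (lam u)"])
     (auto intro!: continuous_at_imp_continuous_on DERIV_isCont has_real_derivative_ln_lam)

inductive moment_poly :: "(real \<Rightarrow> real) \<Rightarrow> bool" where
  const: "moment_poly (\<lambda>u. c)"
| ident: "moment_poly (\<lambda>u. u)"
| ratio: "moment_poly (moment_ratio k)"
| add: "moment_poly f \<Longrightarrow> moment_poly g \<Longrightarrow> moment_poly (\<lambda>u. f u + g u)"
| mult: "moment_poly f \<Longrightarrow> moment_poly g \<Longrightarrow> moment_poly (\<lambda>u. f u * g u)"

lemma moment_poly_uminus: "moment_poly f \<Longrightarrow> moment_poly (\<lambda>u. - f u)"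
  using moment_poly.mult[OF moment_poly.const, of f "-1"] by simp

lemma moment_poly_diff: "moment_poly f \<Longrightarrow> moment_poly g \<Longrightarrow> moment_poly (\<lambda>u. f u - g u)"
  using moment_poly.add[OF _ moment_poly_uminus, of f g] by simp

lemma moment_poly_has_derivative:
  "moment_poly f \<Longrightarrow> \<exists>f'. moment_poly f' \<and> (\<forall>u. (f has_real_derivative f' u) (at u))"
proof (induction rule: moment_poly.induct)
  case (const c)
  show ?case by (intro exI[of _ "\<lambda>u. 0"]) (auto intro: moment_poly.intros)
next
  case ident
  show ?case by (intro exI[of _ "\<lambda>u. 1"]) (auto intro: moment_poly.intros)
next
  case (ratio k)
  show ?case
    using has_real_derivative_moment_ratio
    by (blast intro: moment_poly_diff moment_poly.intros)
next
  case (add f g)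
  then obtain f' g' where "moment_poly f'" "moment_poly g'"
    "\<And>u. (f has_real_derivative f' u) (at u)" "\<And>u. (g has_real_derivative g' u) (at u)" by blast
  then show ?case
    by (intro exI[of _ "\<lambda>u. f' u + g' u"]) (auto intro!: moment_poly.intros derivative_eq_intros)
next
  case (mult f g)
  then obtain f' g' where "moment_poly f'" "moment_poly g'"
    "\<And>u. (f has_real_derivative f' u) (at u)" "\<And>u. (g has_real_derivative g' u) (at u)" by blast
  then show ?case
    by (intro exI[of _ "\<lambda>u. f u * g' u + f' u * g u"])
       (auto intro!: moment_poly.intros derivative_eq_intros mult)
qed

lemma moment_poly_continuous_on: "moment_poly f \<Longrightarrow> continuous_on UNIV f"
  by (metis moment_poly_has_derivative DERIV_isCont continuous_at_imp_continuous_on)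

lemma moment_poly_polynomial_growth:
  "moment_poly f \<Longrightarrow> \<exists>C N. 0 \<le> C \<and> (\<forall>u. \<bar>f u\<bar> \<le> C * (1 + \<bar>u\<bar>) ^ N)"
proof (induction rule: moment_poly.induct)
  case (const c)
  show ?case by (intro exI[of _ "\<bar>c\<bar>"] exI[of _ 0]) auto
next
  case ident
  show ?case by (intro exI[of _ 1] exI[of _ 1]) auto
next
  case (ratio k)
  show ?case by (intro exI[of _ 1] exI[of _ 0]) (auto simp: abs_moment_ratio_le_1)
next
  case (add f g)
  then obtain C1 N1 C2 N2 where b: "0 \<le> C1" "0 \<le> C2" "\<And>u. \<bar>f u\<bar> \<le> C1 * (1 + \<bar>u\<bar>) ^ N1"
    "\<And>u. \<bar>g u\<bar> \<le> C2 * (1 + \<bar>u\<bar>) ^ N2" by blast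
  show ?case
  proof (intro exI[of _ "C1 + C2"] exI[of _ "N1 + N2"] conjI allI)
    fix u
    have "\<bar>f u + g u\<bar> \<le> C1 * (1 + \<bar>u\<bar>) ^ N1 + C2 * (1 + \<bar>u\<bar>) ^ N2"
      using b(3,4)[of u] by linarith
    also have "\<dots> \<le> C1 * (1 + \<bar>u\<bar>) ^ (N1 + N2) + C2 * (1 + \<bar>u\<bar>) ^ (N1 + N2)"
      using b by (intro add_mono mult_left_mono power_increasing) auto
    finally show "\<bar>f u + g u\<bar> \<le> (C1 + C2) * (1 + \<bar>u\<bar>) ^ (N1 + N2)"
      by (simp add: algebra_simps)
  qed (use b in auto)
next
  case (mult f g)
  then obtain C1 N1 C2 N2 where b: "0 \<le> C1" "0 \<le> C2" "\<And>u. \<bar>f u\<bar> \<le> C1 * (1 + \<bar>u\<bar>) ^ N1"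
    "\<And>u. \<bar>g u\<bar> \<le> C2 * (1 + \<bar>u\<bar>) ^ N2" by blast
  show ?case
  proof (intro exI[of _ "C1 * C2"] exI[of _ "N1 + N2"] conjI allI)
    fix u
    have "\<bar>f u * g u\<bar> \<le> (C1 * (1 + \<bar>u\<bar>) ^ N1) * (C2 * (1 + \<bar>u\<bar>) ^ N2)"
      unfolding abs_mult using b by (intro mult_mono) auto
    then show "\<bar>f u * g u\<bar> \<le> (C1 * C2) * (1 + \<bar>u\<bar>) ^ (N1 + N2)"
      by (simp add: algebra_simps power_add)
  qed (use b in auto)
qed

section \<open>Kernels of the transform\<close>

lemma schwartz1_has_vector_derivative:
  "schwartz1 F \<Longrightarrow> ((vd1 ^^ k) F has_vector_derivative (vd1 ^^ Suc k) F y) (at y)"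
  unfolding schwartz1_def by (simp add: vector_derivative_works vd1_def)

lemma schwartz1_continuous_on: "schwartz1 F \<Longrightarrow> continuous_on UNIV ((vd1 ^^ k) F)"
  using schwartz1_has_vector_derivative
  by (blast intro: continuous_at_imp_continuous_on has_vector_derivative_continuous)

lemma one_plus_power_le: "0 \<le> (a::real) \<Longrightarrow> (1 + a) ^ M \<le> 2 ^ M * (1 + a ^ M)"
proof -
  assume "0 \<le> a"
  have "(1 + a) ^ M \<le> (2 * max 1 a) ^ M"
    using \<open>0 \<le> a\<close> by (intro power_mono) auto
  also have "\<dots> \<le> 2 ^ M * (1 + a ^ M)"
    using \<open>0 \<le> a\<close> by (auto simp: power_mult_distrib max_def)
  finally show ?thesis .
qed

lemma schwartz1_weighted_bound:
  assumes "schwartz1 F"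
  obtains C where "\<And>y. (1 + \<bar>y\<bar>) ^ M * norm ((vd1 ^^ k) F y) \<le> C"
proof -
  have "\<exists>B. \<forall>y. norm (complex_of_real (y ^ m) * (vd1 ^^ k) F y) \<le> B" for m
    using assms unfolding schwartz1_def bounded_iff by blast
  then obtain B0 BM where B: "\<And>y. norm (complex_of_real (y ^ 0) * (vd1 ^^ k) F y) \<le> B0"
    "\<And>y. norm (complex_of_real (y ^ M) * (vd1 ^^ k) F y) \<le> BM"
    by meson
  have "(1 + \<bar>y\<bar>) ^ M * norm ((vd1 ^^ k) F y) \<le> 2 ^ M * (B0 + BM)" for y
  proof -
    have "(1 + \<bar>y\<bar>) ^ M * norm ((vd1 ^^ k) F y) \<le> 2 ^ M * (1 + \<bar>y\<bar> ^ M) * norm ((vd1 ^^ k) F y)"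
      by (intro mult_right_mono one_plus_power_le) auto
    also have "\<dots> = 2 ^ M * (norm ((vd1 ^^ k) F y) + norm (complex_of_real (y ^ M) * (vd1 ^^ k) F y))"
      by (simp add: norm_mult norm_power algebra_simps power_abs)
    also have "\<dots> \<le> 2 ^ M * (B0 + BM)"
      using B[of y] by (intro mult_left_mono add_mono) auto
    finally show ?thesis .
  qed
  then show ?thesis by (rule that)
qed

lemma product_decay_bound:
  fixes A B :: "real \<Rightarrow> complex"
  assumes A: "\<And>y. (1 + \<bar>y\<bar>) ^ (b + N + 2) * norm (A y) \<le> C1"
    and B: "\<And>y. (1 + \<bar>y\<bar>) ^ (b + N + 2) * norm (B y) \<le> C2"
    and p: "\<And>u. \<bar>p u\<bar> \<le> C3 * (1 + \<bar>u\<bar>) ^ N" and C3: "0 \<le> C3"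
  shows "\<bar>\<omega>\<bar> ^ b * norm (A (\<omega> + ln (lam u)) * cnj (B (\<omega> + ln (lam (- u)))) * of_real (p u))
           \<le> (C3 * C1 * C2) * inverse (1 + u^2)"
proof -
  define a where "a = \<bar>\<omega> + ln (lam u)\<bar>"
  define c where "c = \<bar>\<omega> + ln (lam (- u))\<bar>"
  define Q where "Q = (1 + a) * (1 + c)"
  define nA where "nA = norm (A (\<omega> + ln (lam u)))"
  define nB where "nB = norm (B (\<omega> + ln (lam (- u))))"
  have nonneg: "0 \<le> a" "0 \<le> c" "0 \<le> nA" "0 \<le> nB" by (auto simp: a_def c_def nA_def nB_def)
  have u: "\<bar>u\<bar> \<le> a + c" and \<omega>: "\<bar>\<omega>\<bar> \<le> a + c"
    using ln_lam_diff[of u] abs_ln_lam_add_le[of u] unfolding a_def c_def by linarith+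
  have Q: "1 + a + c \<le> Q" unfolding Q_def using nonneg by (simp add: algebra_simps)
  have \<omega>_le: "\<bar>\<omega>\<bar> ^ b \<le> Q ^ b" using \<omega> Q by (intro power_mono) auto
  have p_le: "\<bar>p u\<bar> \<le> C3 * Q ^ N"
    using p[of u] u Q C3 by (smt (verit) mult_left_mono power_mono abs_ge_zero)
  have u_le: "1 + u^2 \<le> Q ^ 2"
  proof -
    have "1 + u^2 \<le> (1 + \<bar>u\<bar>)^2" by (simp add: power2_eq_square algebra_simps)
    also have "\<dots> \<le> Q ^ 2" using u Q by (intro power_mono) auto
    finally show ?thesis .
  qed
  have "\<bar>\<omega>\<bar> ^ b * norm (A (\<omega> + ln (lam u)) * cnj (B (\<omega> + ln (lam (- u)))) * of_real (p u)) * (1 + u^2)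
      = \<bar>\<omega>\<bar> ^ b * (nA * nB) * \<bar>p u\<bar> * (1 + u^2)"
    by (simp add: norm_mult nA_def nB_def)
  also have "\<dots> \<le> Q ^ b * (nA * nB) * (C3 * Q ^ N) * Q ^ 2"
    using \<omega>_le p_le u_le nonneg Q by (intro mult_mono) auto
  also have "\<dots> = C3 * (((1 + a) ^ (b + N + 2) * nA) * ((1 + c) ^ (b + N + 2) * nB))"
    unfolding Q_def power_add power_mult_distrib by (simp only: mult_ac)
  also have "\<dots> \<le> C3 * (C1 * C2)"
    using A[of "\<omega> + ln (lam u)"] B[of "\<omega> + ln (lam (- u))"] nonneg C3
      order_trans[OF _ A[of 0]] order_trans[OF _ B[of 0]]
    unfolding a_def c_def nA_def nB_def by (intro mult_left_mono mult_mono) auto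
  finally show ?thesis
    by (simp add: field_simps add_pos_nonneg)
qed

inductive wigner_kernel :: "(real \<Rightarrow> complex) \<Rightarrow> (real \<Rightarrow> complex) \<Rightarrow> (real \<Rightarrow> real \<Rightarrow> complex) \<Rightarrow> bool"
  for F G where
  basic: "moment_poly p \<Longrightarrow> wigner_kernel F G
    (\<lambda>\<omega> u. (vd1 ^^ k) F (\<omega> + ln (lam u)) * cnj ((vd1 ^^ l) G (\<omega> + ln (lam (- u)))) * of_real (p u))"
| add: "wigner_kernel F G f \<Longrightarrow> wigner_kernel F G g \<Longrightarrow> wigner_kernel F G (\<lambda>\<omega> u. f \<omega> u + g \<omega> u)"
| scale: "wigner_kernel F G f \<Longrightarrow> wigner_kernel F G (\<lambda>\<omega> u. c * f \<omega> u)"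

lemma wigner_kernel_mult_u: "wigner_kernel F G h \<Longrightarrow> wigner_kernel F G (\<lambda>\<omega> u. of_real u * h \<omega> u)"
proof (induction rule: wigner_kernel.induct)
  case (basic p k l)
  have "wigner_kernel F G (\<lambda>\<omega> u. (vd1 ^^ k) F (\<omega> + ln (lam u)) * cnj ((vd1 ^^ l) G (\<omega> + ln (lam (- u))))
      * of_real (u * p u))"
    by (intro wigner_kernel.basic moment_poly.intros basic)
  then show ?case by (simp add: algebra_simps)
next
  case (add f g)
  then show ?case using wigner_kernel.add[OF add.IH] by (simp add: algebra_simps)
next
  case (scale f c)
  then show ?case using wigner_kernel.scale[OF scale.IH, of c] by (simp add: algebra_simps)
qed

definition fourier_kernel :: "(real \<Rightarrow> real \<Rightarrow> complex) \<Rightarrow> real \<Rightarrow> real \<Rightarrow> complex" where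
  "fourier_kernel h x \<omega> = (LINT u|lborel. h \<omega> u * cis (- 2 * pi * x * u))"

context
  fixes F G :: "real \<Rightarrow> complex"
  assumes F: "schwartz1 F" and G: "schwartz1 G"
begin

lemma wigner_kernel_has_derivative_omega:
  "wigner_kernel F G h \<Longrightarrow>
    \<exists>h'. wigner_kernel F G h' \<and> (\<forall>\<omega> u. ((\<lambda>\<omega>. h \<omega> u) has_vector_derivative h' \<omega> u) (at \<omega>))"
proof (induction rule: wigner_kernel.induct)
  case (basic p k l)
  let ?h' = "\<lambda>\<omega> u. (vd1 ^^ Suc k) F (\<omega> + ln (lam u)) * cnj ((vd1 ^^ l) G (\<omega> + ln (lam (- u)))) * of_real (p u)
       + (vd1 ^^ k) F (\<omega> + ln (lam u)) * cnj ((vd1 ^^ Suc l) G (\<omega> + ln (lam (- u)))) * of_real (p u)"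
  show ?case
  proof (intro exI conjI allI)
    show "wigner_kernel F G ?h'" by (intro wigner_kernel.add wigner_kernel.basic basic)
    fix \<omega> u
    have shift: "((\<lambda>\<omega>. \<omega> + c) has_real_derivative 1) (at \<omega>)" for c
      by (auto intro!: derivative_eq_intros)
    have "((\<lambda>\<omega>. (vd1 ^^ k) F (\<omega> + ln (lam u))) has_vector_derivative
        (vd1 ^^ Suc k) F (\<omega> + ln (lam u))) (at \<omega>)"
      "((\<lambda>\<omega>. (vd1 ^^ l) G (\<omega> + ln (lam (- u)))) has_vector_derivative
        (vd1 ^^ Suc l) G (\<omega> + ln (lam (- u)))) (at \<omega>)"
      using has_vector_derivative_compose_real[OF shift schwartz1_has_vector_derivative[OF F]]
        has_vector_derivative_compose_real[OF shift schwartz1_has_vector_derivative[OF G]]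
      by simp_all
    from has_vector_derivative_mult[OF has_vector_derivative_mult[OF this(1) has_vector_derivative_cnj[OF this(2)]]
        has_vector_derivative_const[of "of_real (p u)"]]
    show "((\<lambda>\<omega>. (vd1 ^^ k) F (\<omega> + ln (lam u)) * cnj ((vd1 ^^ l) G (\<omega> + ln (lam (- u)))) * of_real (p u))
        has_vector_derivative ?h' \<omega> u) (at \<omega>)"
      by (simp add: algebra_simps)
  qed
next
  case (add f g)
  then obtain f' g' where "wigner_kernel F G f'" "wigner_kernel F G g'"
    "\<And>\<omega> u. ((\<lambda>\<omega>. f \<omega> u) has_vector_derivative f' \<omega> u) (at \<omega>)"
    "\<And>\<omega> u. ((\<lambda>\<omega>. g \<omega> u) has_vector_derivative g' \<omega> u) (at \<omega>)" by blast
  then show ?case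
    by (intro exI[of _ "\<lambda>\<omega> u. f' \<omega> u + g' \<omega> u"]) (auto intro!: wigner_kernel.add derivative_eq_intros)
next
  case (scale f c)
  then obtain f' where "wigner_kernel F G f'" "\<And>\<omega> u. ((\<lambda>\<omega>. f \<omega> u) has_vector_derivative f' \<omega> u) (at \<omega>)"
    by blast
  then show ?case
    by (intro exI[of _ "\<lambda>\<omega> u. c * f' \<omega> u"]) (auto intro!: wigner_kernel.scale derivative_eq_intros)
qed

lemma wigner_kernel_has_derivative_u:
  "wigner_kernel F G h \<Longrightarrow>
    \<exists>h'. wigner_kernel F G h' \<and> (\<forall>\<omega> u. ((\<lambda>u. h \<omega> u) has_vector_derivative h' \<omega> u) (at u))"
proof (induction rule: wigner_kernel.induct)
  case (basic p k l)
  obtain p' where p': "moment_poly p'" "\<And>u. (p has_real_derivative p' u) (at u)"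
    using moment_poly_has_derivative[OF basic] by blast
  let ?h' = "\<lambda>\<omega> u. ((vd1 ^^ Suc k) F (\<omega> + ln (lam u)) * cnj ((vd1 ^^ l) G (\<omega> + ln (lam (- u))))
         * of_real (p u * (1 - moment_ratio 1 u))
       + (vd1 ^^ k) F (\<omega> + ln (lam u)) * cnj ((vd1 ^^ Suc l) G (\<omega> + ln (lam (- u))))
         * of_real (p u * - moment_ratio 1 u))
       + (vd1 ^^ k) F (\<omega> + ln (lam u)) * cnj ((vd1 ^^ l) G (\<omega> + ln (lam (- u)))) * of_real (p' u)"
  show ?case
  proof (intro exI conjI allI)
    show "wigner_kernel F G ?h'"
      by (intro wigner_kernel.add wigner_kernel.basic moment_poly.intros moment_poly_diff moment_poly_uminus
          basic p')
    fix \<omega> u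
    have "((\<lambda>u. (vd1 ^^ k) F (\<omega> + ln (lam u))) has_vector_derivative
        (1 - moment_ratio 1 u) *\<^sub>R (vd1 ^^ Suc k) F (\<omega> + ln (lam u))) (at u)"
      "((\<lambda>u. (vd1 ^^ l) G (\<omega> + ln (lam (- u)))) has_vector_derivative
        (- moment_ratio 1 u) *\<^sub>R (vd1 ^^ Suc l) G (\<omega> + ln (lam (- u)))) (at u)"
      using has_vector_derivative_compose_real[OF DERIV_add[OF DERIV_const has_real_derivative_ln_lam]
          schwartz1_has_vector_derivative[OF F]]
        has_vector_derivative_compose_real[OF DERIV_add[OF DERIV_const has_real_derivative_ln_lam_uminus]
          schwartz1_has_vector_derivative[OF G]]
      by simp_all
    from has_vector_derivative_mult[OF has_vector_derivative_mult[OF this(1) has_vector_derivative_cnj[OF this(2)]]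
        has_vector_derivative_of_real[OF p'(2)]]
    show "((\<lambda>u. (vd1 ^^ k) F (\<omega> + ln (lam u)) * cnj ((vd1 ^^ l) G (\<omega> + ln (lam (- u)))) * of_real (p u))
        has_vector_derivative ?h' \<omega> u) (at u)"
      by (simp add: algebra_simps scaleR_conv_of_real)
  qed
next
  case (add f g)
  then obtain f' g' where "wigner_kernel F G f'" "wigner_kernel F G g'"
    "\<And>\<omega> u. ((\<lambda>u. f \<omega> u) has_vector_derivative f' \<omega> u) (at u)"
    "\<And>\<omega> u. ((\<lambda>u. g \<omega> u) has_vector_derivative g' \<omega> u) (at u)" by blast
  then show ?case
    by (intro exI[of _ "\<lambda>\<omega> u. f' \<omega> u + g' \<omega> u"]) (auto intro!: wigner_kernel.add derivative_eq_intros)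
next
  case (scale f c)
  then obtain f' where "wigner_kernel F G f'" "\<And>\<omega> u. ((\<lambda>u. f \<omega> u) has_vector_derivative f' \<omega> u) (at u)"
    by blast
  then show ?case
    by (intro exI[of _ "\<lambda>\<omega> u. c * f' \<omega> u"]) (auto intro!: wigner_kernel.scale derivative_eq_intros)
qed

lemma wigner_kernel_decay:
  "wigner_kernel F G h \<Longrightarrow> \<exists>K. \<forall>\<omega> u. \<bar>\<omega>\<bar> ^ b * norm (h \<omega> u) \<le> K * inverse (1 + u^2)"
proof (induction rule: wigner_kernel.induct)
  case (basic p k l)
  obtain C3 N where "0 \<le> C3" "\<And>u. \<bar>p u\<bar> \<le> C3 * (1 + \<bar>u\<bar>) ^ N"
    using moment_poly_polynomial_growth[OF basic] by blast
  moreover obtain C1 C2 where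
    "\<And>y. (1 + \<bar>y\<bar>) ^ (b + N + 2) * norm ((vd1 ^^ k) F y) \<le> C1"
    "\<And>y. (1 + \<bar>y\<bar>) ^ (b + N + 2) * norm ((vd1 ^^ l) G y) \<le> C2"
    using schwartz1_weighted_bound[OF F] schwartz1_weighted_bound[OF G] by metis
  ultimately show ?case
    using product_decay_bound by blast
next
  case (add f g)
  then obtain K1 K2 where K: "\<And>\<omega> u. \<bar>\<omega>\<bar> ^ b * norm (f \<omega> u) \<le> K1 * inverse (1 + u^2)"
    "\<And>\<omega> u. \<bar>\<omega>\<bar> ^ b * norm (g \<omega> u) \<le> K2 * inverse (1 + u^2)" by blast
  have "\<bar>\<omega>\<bar> ^ b * norm (f \<omega> u + g \<omega> u) \<le> (K1 + K2) * inverse (1 + u^2)" for \<omega> u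
  proof -
    have "\<bar>\<omega>\<bar> ^ b * norm (f \<omega> u + g \<omega> u) \<le> \<bar>\<omega>\<bar> ^ b * norm (f \<omega> u) + \<bar>\<omega>\<bar> ^ b * norm (g \<omega> u)"
      unfolding distrib_left[symmetric] by (intro mult_left_mono norm_triangle_ineq) auto
    then show ?thesis using K[of \<omega> u] by (simp add: algebra_simps)
  qed
  then show ?case by blast
next
  case (scale f c)
  then obtain K where K: "\<And>\<omega> u. \<bar>\<omega>\<bar> ^ b * norm (f \<omega> u) \<le> K * inverse (1 + u^2)" by blast
  have "\<bar>\<omega>\<bar> ^ b * norm (c * f \<omega> u) \<le> (norm c * K) * inverse (1 + u^2)" for \<omega> u
    using mult_left_mono[OF K[of \<omega> u] norm_ge_zero[of c]] by (simp add: norm_mult algebra_simps)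
  then show ?case by blast
qed

lemma wigner_kernel_continuous_on: "wigner_kernel F G h \<Longrightarrow> continuous_on UNIV (\<lambda>q. h (fst q) (snd q))"
proof (induction rule: wigner_kernel.induct)
  case (basic p k l)
  have "continuous_on UNIV (\<lambda>q::real \<times> real. (vd1 ^^ k) F (fst q + ln (lam (snd q))))"
    "continuous_on UNIV (\<lambda>q::real \<times> real. (vd1 ^^ l) G (fst q + ln (lam (- snd q))))"
    "continuous_on UNIV (\<lambda>q::real \<times> real. p (snd q))"
    by (intro continuous_on_compose2[OF schwartz1_continuous_on[OF F]]
        continuous_on_compose2[OF schwartz1_continuous_on[OF G]]
        continuous_on_compose2[OF moment_poly_continuous_on[OF basic]] continuous_intros; simp)+
  then show ?case by (auto intro!: continuous_intros)
qed (auto intro!: continuous_intros)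

lemma wigner_kernel_continuous_on_u: "wigner_kernel F G h \<Longrightarrow> continuous_on UNIV (h \<omega>)"
  using continuous_on_compose2[OF wigner_kernel_continuous_on
      continuous_on_Pair[OF continuous_on_const continuous_on_id], of h \<omega>]
  by simp

lemma wigner_kernel_inverse_square_bound:
  assumes "wigner_kernel F G h"
  obtains K where "\<And>\<omega> u. norm (h \<omega> u) \<le> K * inverse (1 + u^2)"
  using wigner_kernel_decay[OF assms, of 0] by auto

lemma wigner_kernel_cis_measurable:
  assumes "wigner_kernel F G h"
  shows "(\<lambda>u. h \<omega> u * cis (c * u)) \<in> borel_measurable lborel"
proof -
  have "continuous_on UNIV (\<lambda>u. h \<omega> u * cis (c * u))"
    by (intro continuous_intros wigner_kernel_continuous_on_u[OF assms])
  then show ?thesis by (simp add: borel_measurable_continuous_onI)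
qed

lemma wigner_kernel_cis_integrable:
  assumes "wigner_kernel F G h"
  shows "integrable lborel (\<lambda>u. h \<omega> u * cis (c * u))"
proof -
  obtain K where "\<And>\<omega> u. norm (h \<omega> u) \<le> K * inverse (1 + u^2)"
    using wigner_kernel_inverse_square_bound[OF assms] by blast
  then show ?thesis
    by (intro integrable_of_inverse_square_bound[where K=K] wigner_kernel_cis_measurable[OF assms])
       (simp add: norm_mult)
qed

lemma fourier_kernel_has_derivative_x:
  assumes h: "wigner_kernel F G h"
  shows "((\<lambda>x. fourier_kernel h x \<omega>) has_vector_derivative
    fourier_kernel (\<lambda>\<omega> u. - 2 * pi * \<i> * (of_real u * h \<omega> u)) x \<omega>) (at x)"
proof -
  define h' where "h' \<omega> u = - 2 * pi * \<i> * (of_real u * h \<omega> u)" for \<omega> u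
  have h': "wigner_kernel F G h'"
    unfolding h'_def by (intro wigner_kernel.scale wigner_kernel_mult_u h)
  obtain K where K: "\<And>\<omega> u. norm (h' \<omega> u) \<le> K * inverse (1 + u^2)"
    using wigner_kernel_inverse_square_bound[OF h'] by blast
  have "((\<lambda>x. LINT u|lborel. h \<omega> u * cis ((- 2 * pi * u) * x)) has_vector_derivative
      (LINT u|lborel. h' \<omega> u * cis ((- 2 * pi * u) * x))) (at x)"
  proof (rule has_vector_derivative_integral_param[where w="\<lambda>u. K * inverse (1 + u^2)"])
    show "((\<lambda>x. h \<omega> u * cis ((- 2 * pi * u) * x)) has_vector_derivative
        h' \<omega> u * cis ((- 2 * pi * u) * x)) (at x)" for x u
      using has_vector_derivative_mult_right[OF has_vector_derivative_cis_mult[of "- 2 * pi * u" x UNIV],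
          of "h \<omega> u"]
      by (simp add: h'_def algebra_simps)
    show "(\<lambda>u. h' \<omega> u * cis ((- 2 * pi * u) * x)) \<in> borel_measurable lborel" for x
      using wigner_kernel_cis_measurable[OF h', of \<omega> "- 2 * pi * x"] by (simp add: mult_ac)
    show "integrable lborel (\<lambda>u. h \<omega> u * cis ((- 2 * pi * u) * x))" for x
      using wigner_kernel_cis_integrable[OF h, of \<omega> "- 2 * pi * x"] by (simp add: mult_ac)
  qed (simp_all add: norm_mult K integrable_inverse_square)
  then show ?thesis
    unfolding fourier_kernel_def h'_def by (simp add: mult_ac)
qed

lemma fourier_kernel_has_derivative_omega:
  assumes h: "wigner_kernel F G h" and h': "wigner_kernel F G h'"
    and deriv: "\<And>\<omega> u. ((\<lambda>\<omega>. h \<omega> u) has_vector_derivative h' \<omega> u) (at \<omega>)"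
  shows "((\<lambda>\<omega>. fourier_kernel h x \<omega>) has_vector_derivative fourier_kernel h' x \<omega>) (at \<omega>)"
proof -
  obtain K where K: "\<And>\<omega> u. norm (h' \<omega> u) \<le> K * inverse (1 + u^2)"
    using wigner_kernel_inverse_square_bound[OF h'] by blast
  show ?thesis
    unfolding fourier_kernel_def
  proof (rule has_vector_derivative_integral_param[where w="\<lambda>u. K * inverse (1 + u^2)"])
    show "((\<lambda>\<omega>. h \<omega> u * cis (- 2 * pi * x * u)) has_vector_derivative h' \<omega> u * cis (- 2 * pi * x * u))
        (at \<omega>)" for \<omega> u
      using has_vector_derivative_mult[OF deriv has_vector_derivative_const] by simp
    show "(\<lambda>u. h' \<omega> u * cis (- 2 * pi * x * u)) \<in> borel_measurable lborel" for \<omega>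
      using wigner_kernel_cis_measurable[OF h', of \<omega> "- 2 * pi * x"] by simp
    show "integrable lborel (\<lambda>u. h \<omega> u * cis (- 2 * pi * x * u))" for \<omega>
      using wigner_kernel_cis_integrable[OF h, of \<omega> "- 2 * pi * x"] by simp
  qed (simp_all add: norm_mult K integrable_inverse_square)
qed

lemma fourier_kernel_continuous_on:
  assumes h: "wigner_kernel F G h"
  shows "continuous_on UNIV (\<lambda>q. fourier_kernel h (fst q) (snd q))"
proof -
  obtain K where K: "\<And>\<omega> u. norm (h \<omega> u) \<le> K * inverse (1 + u^2)"
    using wigner_kernel_inverse_square_bound[OF h] by blast
  show ?thesis
    unfolding fourier_kernel_def
  proof (rule continuous_on_integral_param[where w="\<lambda>u. K * inverse (1 + u^2)"])
    show "continuous_on UNIV (\<lambda>q. h (snd q) u * cis (- 2 * pi * fst q * u))" for u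
    proof -
      have "continuous_on UNIV (\<lambda>q::real \<times> real. (snd q, u))"
        by (intro continuous_intros)
      from continuous_on_compose2[OF wigner_kernel_continuous_on[OF h] this]
      show ?thesis by (auto intro!: continuous_intros)
    qed
    show "(\<lambda>u. h (snd q) u * cis (- 2 * pi * fst q * u)) \<in> borel_measurable lborel" for q
      using wigner_kernel_cis_measurable[OF h, of "snd q" "- 2 * pi * fst q"] by simp
  qed (simp_all add: norm_mult K integrable_inverse_square)
qed

lemma fourier_kernel_decay:
  "wigner_kernel F G h \<Longrightarrow> \<exists>B. \<forall>x \<omega>. norm (complex_of_real (x ^ a * \<omega> ^ b) * fourier_kernel h x \<omega>) \<le> B"
proof (induction a arbitrary: h)
  case 0
  obtain K where K: "\<And>\<omega> u. \<bar>\<omega>\<bar> ^ b * norm (h \<omega> u) \<le> K * inverse (1 + u^2)"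
    using wigner_kernel_decay[OF 0] by blast
  have "norm (complex_of_real (x ^ 0 * \<omega> ^ b) * fourier_kernel h x \<omega>) \<le> K * pi" for x \<omega>
    unfolding fourier_kernel_def integral_mult_right_zero[symmetric] power_0 mult_1
  proof (rule norm_integral_le_of_inverse_square_bound)
    show "(\<lambda>u. complex_of_real (\<omega> ^ b) * (h \<omega> u * cis (- 2 * pi * x * u))) \<in> borel_measurable lborel"
      using wigner_kernel_cis_measurable[OF 0, of \<omega> "- 2 * pi * x"] by simp
    show "norm (complex_of_real (\<omega> ^ b) * (h \<omega> u * cis (- 2 * pi * x * u))) \<le> K * inverse (1 + u^2)" for u
      using K[of \<omega> u] by (simp add: norm_mult norm_power power_abs)
  qed
  then show ?case by blast
next
  case (Suc a)
  obtain h' where h': "wigner_kernel F G h'" "\<And>\<omega> u. ((\<lambda>u. h \<omega> u) has_vector_derivative h' \<omega> u) (at u)"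
    using wigner_kernel_has_derivative_u[OF Suc.prems] by blast
  obtain B where B: "\<And>x \<omega>. norm (complex_of_real (x ^ a * \<omega> ^ b) * fourier_kernel h' x \<omega>) \<le> B"
    using Suc.IH[OF h'(1)] by blast
  obtain K K' where K: "\<And>\<omega> u. norm (h \<omega> u) \<le> K * inverse (1 + u^2)"
    "\<And>\<omega> u. norm (h' \<omega> u) \<le> K' * inverse (1 + u^2)"
    using wigner_kernel_inverse_square_bound[OF Suc.prems] wigner_kernel_inverse_square_bound[OF h'(1)]
    by metis
  have ibp: "fourier_kernel h' x \<omega> = 2 * pi * \<i> * x * fourier_kernel h x \<omega>" for x \<omega>
    unfolding fourier_kernel_def
    using integral_deriv_mult_cis[where c="- 2 * pi * x", OF h'(2) wigner_kernel_continuous_on_u[OF h'(1)]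
        K(1)[of \<omega>] K(2)[of \<omega>]]
    by simp
  have "norm (complex_of_real (x ^ Suc a * \<omega> ^ b) * fourier_kernel h x \<omega>) \<le> B / (2 * pi)" for x \<omega>
    using B[of x \<omega>] by (simp add: ibp norm_mult norm_power abs_mult field_simps)
  then show ?case by blast
qed

end

lemma pderivs_fourier_kernel:
  assumes F: "schwartz1 F" and G: "schwartz1 G" and h: "wigner_kernel F G h"
  shows "\<exists>h'. wigner_kernel F G h' \<and> pderivs ws (fourier_kernel h) = fourier_kernel h'"
proof (induction ws)
  case Nil
  show ?case using h by (auto simp: pderivs_def)
next
  case (Cons d ws)
  then obtain h1 where h1: "wigner_kernel F G h1" "pderivs ws (fourier_kernel h) = fourier_kernel h1"
    by blast
  show ?case
  proof (cases d)
    case True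
    have "wigner_kernel F G (\<lambda>\<omega> u. - 2 * pi * \<i> * (of_real u * h1 \<omega> u))"
      by (intro wigner_kernel.scale wigner_kernel_mult_u h1(1))
    moreover have "pdir d (fourier_kernel h1) = fourier_kernel (\<lambda>\<omega> u. - 2 * pi * \<i> * (of_real u * h1 \<omega> u))"
      using True vector_derivative_at[OF fourier_kernel_has_derivative_x[OF F G h1(1)]]
      by (auto simp: pdir_def)
    ultimately show ?thesis
      using h1(2) by (auto simp: pderivs_def)
  next
    case False
    obtain h' where "wigner_kernel F G h'" "\<And>\<omega> u. ((\<lambda>\<omega>. h1 \<omega> u) has_vector_derivative h' \<omega> u) (at \<omega>)"
      using wigner_kernel_has_derivative_omega[OF F G h1(1)] by blast
    moreover from this have "pdir d (fourier_kernel h1) = fourier_kernel h'"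
      using False vector_derivative_at[OF fourier_kernel_has_derivative_omega[OF F G h1(1)]]
      by (auto simp: pdir_def)
    ultimately show ?thesis
      using h1(2) by (auto simp: pderivs_def)
  qed
qed

lemma schwartz2_fourier_kernel:
  assumes F: "schwartz1 F" and G: "schwartz1 G" and h: "wigner_kernel F G h"
  shows "schwartz2 (fourier_kernel h)"
  unfolding schwartz2_def
proof (intro allI conjI)
  fix ws
  obtain h' where h': "wigner_kernel F G h'" "pderivs ws (fourier_kernel h) = fourier_kernel h'"
    using pderivs_fourier_kernel[OF F G h] by blast
  show "continuous_on UNIV (\<lambda>p. pderivs ws (fourier_kernel h) (fst p) (snd p))"
    using fourier_kernel_continuous_on[OF F G h'(1)] h'(2) by simp
  obtain h'' where "wigner_kernel F G h''" "\<And>\<omega> u. ((\<lambda>\<omega>. h' \<omega> u) has_vector_derivative h'' \<omega> u) (at \<omega>)"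
    using wigner_kernel_has_derivative_omega[OF F G h'(1)] by blast
  then show "(\<lambda>t. pderivs ws (fourier_kernel h) t y) differentiable at x"
    "(\<lambda>t. pderivs ws (fourier_kernel h) x t) differentiable at y" for x y
    using differentiableI_vector[OF fourier_kernel_has_derivative_x[OF F G h'(1)]]
      differentiableI_vector[OF fourier_kernel_has_derivative_omega[OF F G h'(1)]] h'(2)
    by auto
next
  fix ws a b
  obtain h' where h': "wigner_kernel F G h'" "pderivs ws (fourier_kernel h) = fourier_kernel h'"
    using pderivs_fourier_kernel[OF F G h] by blast
  then show "bounded (range (\<lambda>p. complex_of_real (fst p ^ a * snd p ^ b) *
      pderivs ws (fourier_kernel h) (fst p) (snd p)))"
    using fourier_kernel_decay[OF F G h'(1), of a b] by (auto simp: bounded_iff)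
qed

lemma wigner_kernel_integrand: "wigner_kernel F G (\<lambda>\<omega> u. F (\<omega> + ln (lam u)) * cnj (G (\<omega> + ln (lam (- u)))))"
  using wigner_kernel.basic[OF moment_poly.const, of F G 0 0 1] by simp

lemma W_Aff_exp_eq_fourier_kernel:
  "(\<lambda>x \<omega>. W_Aff \<psi> \<phi> x (exp \<omega>)) =
    fourier_kernel (\<lambda>\<omega> u. \<psi> (exp (\<omega> + ln (lam u))) * cnj (\<phi> (exp (\<omega> + ln (lam (- u))))))"
  by (simp add: W_Aff_def fourier_kernel_def[abs_def] exp_add lam_pos)

theorem mainTheorem10:
  fixes \<psi> \<phi> :: "real \<Rightarrow> complex"
  assumes "schwartz_Rplus \<psi>" and "schwartz_Rplus \<phi>"
  shows "schwartz_Aff (W_Aff \<psi> \<phi>)"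
  using schwartz2_fourier_kernel[OF assms[unfolded schwartz_Rplus_def] wigner_kernel_integrand]
  by (simp add: schwartz_Aff_def W_Aff_exp_eq_fourier_kernel)

end
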